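(* Let $A=(a_{ij})_{0\le i,j\le n}$ be a square integer matrix with nonnegative entries such that $F_A=\sum_{i=0}^n\prod_{j=0}^n x_j^{a_{ij}}$ is an invertible polynomial, and let $p$ be a prime with $\det A \mid (p-1)$. Let \[\Xi=\{(A^T)^{-1}\vec v \;:\; \vec v=(v_0,\dots,v_n)\in\mathbb{Z}^{n+1},\ v_0,\dots,v_n\ge 1\}\subset\mathbb{Q}^{n+1}.\] For $\vec\xi=(\xi_0,\dots,\xi_n)\in\Xi$ put $\mathrm{age}(\vec\xi)=\sum_{i=0}^n\xi_i$ and, when all $\xi_i\ge 0$ (so that each $(p-1)\xi_i$ is a nonnegative integer), \[\nu(\vec\xi)=\frac{(p-1)!}{\prod_{i=0}^n\big((p-1)\xi_i\big)!}.\] Let $\nu(A)$ denote the number of points $\vec x\in\mathbb{F}_p^{n+1}$ with $F_A(\vec x)=0$. Then \[\nu(A)\equiv(-1)^n\sum_{\substack{\vec\xi\in\Xi,\ \mathrm{age}(\vec\xi)=1\\ \xi_i\ge 0\ \forall i}}\nu(\vec\xi)\pmod p.\] *)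

theory Defs
  imports "HOL-Analysis.Analysis" "HOL-Number_Theory.Cong"
begin

text \<open>Exponent matrices are indexed by a finite type 'n with CARD('n) = n+1.
  Row i gives the exponents of the i-th monomial.\<close>

definition FA :: "int^'n^'n \<Rightarrow> 'a::comm_semiring_1^'n \<Rightarrow> 'a" where
  "FA A x = (\<Sum>i\<in>UNIV. \<Prod>j\<in>UNIV. (x$j) ^ nat (A$i$j))"

definition FA_partial :: "int^'n^'n \<Rightarrow> 'n \<Rightarrow> complex^'n \<Rightarrow> complex" where
  "FA_partial A k x = (\<Sum>i\<in>UNIV. of_int (A$i$k) * (x$k) ^ (nat (A$i$k) - 1)
        * (\<Prod>j\<in>UNIV - {k}. (x$j) ^ nat (A$i$j)))"

text \<open>Invertible polynomial (Berglund--Huebsch / Kreuzer--Skarke): the exponent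
  matrix is invertible, F_A is quasi-homogeneous with positive rational weights,
  and F_A has an isolated critical point at the origin of C^(n+1).\<close>
definition invertible_poly :: "int^'n^'n \<Rightarrow> bool" where
  "invertible_poly A \<longleftrightarrow>
     det A \<noteq> 0 \<and>
     (\<exists>q::rat^'n. (\<forall>j. q$j > 0) \<and> (\<forall>i. (\<Sum>j\<in>UNIV. of_int (A$i$j) * q$j) = 1)) \<and>
     (\<exists>e>0. \<forall>x::complex^'n. norm x < e \<and> (\<forall>k. FA_partial A k x = 0) \<longrightarrow> x = 0)"

definition ratmat :: "int^'n^'m \<Rightarrow> rat^'n^'m" where
  "ratmat A = (\<chi> i j. of_int (A$i$j))"

definition Xi :: "int^'n^'n \<Rightarrow> (rat^'n) set" where
  "Xi A = {matrix_inv (transpose (ratmat A)) *v (\<chi> i. of_int (v$i)) | v::int^'n. \<forall>i. v$i \<ge> 1}"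

definition age :: "rat^'n \<Rightarrow> rat" where
  "age \<xi> = (\<Sum>i\<in>UNIV. \<xi>$i)"

text \<open>nu(xi) = (p-1)! / prod_i ((p-1) xi_i)!  (an integer, the multinomial coefficient,
  when the (p-1) xi_i are nonnegative integers summing to p-1).\<close>
definition nu_xi :: "nat \<Rightarrow> rat^'n \<Rightarrow> int" where
  "nu_xi p \<xi> = fact (p - 1) div (\<Prod>i\<in>UNIV. fact (nat \<lfloor>of_nat (p - 1) * \<xi>$i\<rfloor>))"

text \<open>Number of F_p-points of F_A = 0 (points represented by integer vectors in [0,p)).\<close>
definition num_zeros :: "int^'n^'n \<Rightarrow> nat \<Rightarrow> nat" where
  "num_zeros A p = card {x::int^'n. (\<forall>i. 0 \<le> x$i \<and> x$i < int p) \<and> int p dvd FA A x}"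

end

theory Submission
  imports Defs "HOL-Number_Theory.Number_Theory" "HOL-Combinatorics.Multiset_Permutations"
begin

text \<open>By Fermat's little theorem \<open>1 - F(x)^(p-1)\<close> is the indicator of the zeros of \<open>F\<close>
  on \<open>F_p^(n+1)\<close>, and \<open>p^(n+1) \<equiv> 0\<close>, so \<open>\<nu>(A) \<equiv> - \<Sum>_x F(x)^(p-1)\<close>. Expanding
  \<open>F^(p-1)\<close> over words of \<open>p - 1\<close> monomials, a word with multiplicity vector \<open>c\<close> yields
  the monomial \<open>x^(A^T c)\<close>, and \<open>\<Sum>_x x^e = \<Prod>_j \<Sum>_y y^(e_j)\<close> is \<open>\<equiv> (-1)^(n+1)\<close> when
  every \<open>e_j\<close> is a positive multiple of \<open>p - 1\<close> and \<open>\<equiv> 0\<close> otherwise. That condition says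
  exactly that \<open>\<xi> = c / (p - 1)\<close> lies in \<open>\<Xi>\<close>; such \<open>\<xi>\<close> is nonnegative of age 1, and
  the words with multiplicities \<open>c\<close> number \<open>\<nu>(\<xi>)\<close>. Conversely \<open>det A \<cdot> \<xi>\<close> is integral
  for \<open>\<xi> \<in> \<Xi>\<close> by Cramer's rule, so \<open>det A | p - 1\<close> makes every nonnegative \<open>\<xi> \<in> \<Xi>\<close>
  of age 1 arise from some \<open>c\<close>.\<close>

section \<open>Power sums modulo a prime\<close>

lemma fermat_theorem_int:
  fixes a :: int
  assumes p: "prime p" and not_dvd: "\<not> int p dvd a"
  shows "[a ^ (p - 1) = 1] (mod int p)"
proof -
  define m where "m = nat (a mod int p)"
  have a_cong: "[a = int m] (mod int p)"
    unfolding m_def using prime_gt_0_nat[OF p] by (simp add: cong_def)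
  with not_dvd have "\<not> p dvd m"
    by (metis cong_dvd_iff of_nat_dvd_iff)
  then have "[int m ^ (p - 1) = 1] (mod int p)"
    using fermat_theorem[OF p] by (metis cong_int_iff of_nat_1 of_nat_power)
  then show ?thesis
    using cong_pow[OF a_cong] cong_trans by blast
qed

lemma bij_betw_mult_mod_prime:
  fixes g :: int
  assumes p: "prime p" and not_dvd: "\<not> int p dvd g"
  shows "bij_betw (\<lambda>y. g * y mod int p) {0..<int p} {0..<int p}"
proof -
  have prime_p: "prime (int p)"
    using p by simp
  have inj: "inj_on (\<lambda>y. g * y mod int p) {0..<int p}"
  proof
    fix a b assume a: "a \<in> {0..<int p}" and b: "b \<in> {0..<int p}"
      and "g * a mod int p = g * b mod int p"
    then have "int p dvd g * (a - b)"
      by (metis mod_eq_dvd_iff right_diff_distrib)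
    then have "int p dvd a - b"
      using not_dvd prime_p prime_dvd_mult_iff by blast
    then show "a = b"
      using a b by (metis atLeastLessThan_iff mod_eq_dvd_iff mod_pos_pos_trivial)
  qed
  have "(\<lambda>y. g * y mod int p) ` {0..<int p} \<subseteq> {0..<int p}"
    using prime_gt_0_nat[OF p] by auto
  then show ?thesis
    using endo_inj_surj[OF _ _ inj] inj by (simp add: bij_betw_def)
qed

lemma sum_powers_mod_prime:
  assumes p: "prime p"
  shows "[(\<Sum>y\<in>{0..<int p}. y ^ e) = (if 0 < e \<and> (p - 1) dvd e then -1 else 0)] (mod int p)"
proof -
  have p1: "p > 1"
    using p prime_gt_1_nat by blast
  consider "e = 0" | "0 < e" "(p - 1) dvd e" | "0 < e" "\<not> (p - 1) dvd e"
    by blast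
  then show ?thesis
  proof cases
    case 1
    then show ?thesis
      using p1 by (simp add: cong_def)
  next
    case 2
    have "{0..<int p} = insert 0 {1..<int p}"
      using p1 by auto
    then have "(\<Sum>y\<in>{0..<int p}. y ^ e) = (\<Sum>y\<in>{1..<int p}. y ^ e)"
      using 2 by simp
    also have "[\<dots> = (\<Sum>y\<in>{1..<int p}. 1)] (mod int p)"
    proof (rule cong_sum)
      fix y assume "y \<in> {1..<int p}"
      then have "\<not> int p dvd y"
        using zdvd_imp_le by fastforce
      then have "[(y ^ (p - 1)) ^ (e div (p - 1)) = 1 ^ (e div (p - 1))] (mod int p)"
        by (intro cong_pow fermat_theorem_int[OF p])
      moreover have "(y ^ (p - 1)) ^ (e div (p - 1)) = y ^ e"
        using 2 by (simp flip: power_mult)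
      ultimately show "[y ^ e = 1] (mod int p)"
        by simp
    qed
    also have "(\<Sum>y\<in>{1..<int p}. (1::int)) = int p - 1"
      using p1 by simp
    also have "[int p - 1 = -1] (mod int p)"
      by (simp add: cong_iff_dvd_diff)
    finally show ?thesis
      using 2 by simp
  next
    case 3
    obtain g where "residue_primroot p g"
      using prime_primitive_root_exists[OF p1 p] by blast
    then have "ord p g = p - 1" "coprime p g"
      using p by (auto simp: residue_primroot_def totient_prime)
    with 3 have "\<not> [g ^ e = 1] (mod p)"
      using ord_divides'[of g e p] by simp
    then have not_one: "\<not> [int g ^ e = 1] (mod int p)"
      by (metis cong_int_iff of_nat_1 of_nat_power)
    have not_dvd: "\<not> int p dvd int g"
      using \<open>coprime p g\<close> p1 coprime_absorb_left[of p g] by auto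
    define S where "S = (\<Sum>y\<in>{0..<int p}. y ^ e)"
    \<comment> \<open>Substituting \<open>y \<mapsto> g y\<close> multiplies the power sum by \<open>g\<^sup>e \<noteq> 1\<close>.\<close>
    have "S = (\<Sum>y\<in>{0..<int p}. (int g * y mod int p) ^ e)"
      unfolding S_def by (rule sum.reindex_bij_betw[OF bij_betw_mult_mod_prime[OF p not_dvd], symmetric])
    also have "[\<dots> = (\<Sum>y\<in>{0..<int p}. int g ^ e * y ^ e)] (mod int p)"
      by (rule cong_sum) (simp add: cong_def power_mod power_mult_distrib)
    also have "(\<Sum>y\<in>{0..<int p}. int g ^ e * y ^ e) = int g ^ e * S"
      unfolding S_def by (simp add: sum_distrib_left)
    finally have "[int g ^ e * S = S] (mod int p)"
      by (rule cong_sym)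
    then have "int p dvd int g ^ e * S - S"
      by (simp add: cong_iff_dvd_diff)
    then have "int p dvd (int g ^ e - 1) * S"
      by (simp add: left_diff_distrib)
    moreover have "\<not> int p dvd int g ^ e - 1"
      using not_one by (simp add: cong_iff_dvd_diff)
    ultimately have "int p dvd S"
      using p prime_dvd_mult_iff[of "int p"] by simp
    then show ?thesis
      using 3 by (simp add: S_def cong_def)
  qed
qed

section \<open>Sums over the residue box\<close>

definition residue_box :: "nat \<Rightarrow> (int^'n) set" where
  "residue_box p = {x. \<forall>i. x$i \<in> {0..<int p}}"

lemma vec_components_in_eq_image_PiE:
  "{x::'a^'n::finite. \<forall>i. x$i \<in> T} = vec_lambda ` PiE UNIV (\<lambda>_. T)"
proof (intro equalityI subsetI)
  fix x :: "'a^'n" assume "x \<in> {x. \<forall>i. x$i \<in> T}"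
  then have "vec_nth x \<in> PiE UNIV (\<lambda>_. T)" by auto
  then show "x \<in> vec_lambda ` PiE UNIV (\<lambda>_. T)"
    by (metis image_eqI vec_nth_inverse)
next
  fix x :: "'a^'n" assume "x \<in> vec_lambda ` PiE UNIV (\<lambda>_. T)"
  then obtain f where "f \<in> PiE UNIV (\<lambda>_. T)" "x = vec_lambda f"
    by blast
  then show "x \<in> {x. \<forall>i. x$i \<in> T}"
    by (simp add: PiE_iff)
qed

lemma sum_vec_prod_eq_prod_sum:
  fixes g :: "'n::finite \<Rightarrow> 'a \<Rightarrow> 'b::comm_semiring_1"
  assumes "finite T"
  shows "(\<Sum>x\<in>{x::'a^'n. \<forall>i. x$i \<in> T}. \<Prod>j\<in>UNIV. g j (x$j)) = (\<Prod>j\<in>UNIV. \<Sum>y\<in>T. g j y)"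
proof -
  have "(\<Prod>j\<in>UNIV. \<Sum>y\<in>T. g j y) = (\<Sum>f\<in>PiE UNIV (\<lambda>_. T). \<Prod>j\<in>UNIV. g j (f j))"
    using prod_sum_PiE[of UNIV "\<lambda>_. T" g] assms by simp
  also have "\<dots> = (\<Sum>x\<in>vec_lambda ` PiE UNIV (\<lambda>_. T). \<Prod>j\<in>UNIV. g j (x$j))"
    by (subst sum.reindex) (auto simp: inj_on_def vec_eq_iff)
  finally show ?thesis
    by (simp add: vec_components_in_eq_image_PiE)
qed

lemma finite_residue_box: "finite (residue_box p :: (int^'n) set)"
  unfolding residue_box_def vec_components_in_eq_image_PiE by (simp add: finite_PiE)

lemma sum_monomial_residue_box_cong:
  fixes e :: "'n::finite \<Rightarrow> nat"
  assumes p: "prime p"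
  shows "[(\<Sum>x\<in>residue_box p. \<Prod>j\<in>UNIV. (x$j) ^ e j)
          = (if \<forall>j. 0 < e j \<and> (p - 1) dvd e j then (-1) ^ CARD('n) else 0)] (mod int p)"
proof -
  have "(\<Sum>x\<in>residue_box p. \<Prod>j\<in>UNIV. (x$j) ^ e j) = (\<Prod>j\<in>UNIV. \<Sum>y\<in>{0..<int p}. y ^ e j)"
    unfolding residue_box_def by (rule sum_vec_prod_eq_prod_sum) simp
  also have "[\<dots> = (\<Prod>j\<in>UNIV. if 0 < e j \<and> (p - 1) dvd e j then -1 else 0)] (mod int p)"
    by (intro cong_prod sum_powers_mod_prime[OF p])
  also have "(\<Prod>j\<in>UNIV. if 0 < e j \<and> (p - 1) dvd e j then -1 else 0 :: int)
      = (if \<forall>j. 0 < e j \<and> (p - 1) dvd e j then (-1) ^ CARD('n) else 0)"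
    by (auto simp: prod_zero_iff)
  finally show ?thesis .
qed

lemma card_zeros_residue_box_cong:
  fixes f :: "int^'n \<Rightarrow> int"
  assumes p: "prime p"
  shows "[int (card {x\<in>residue_box p. int p dvd f x}) = - (\<Sum>x\<in>residue_box p. f x ^ (p - 1))] (mod int p)"
proof -
  have p1: "p > 1"
    using p prime_gt_1_nat by blast
  have "int (card {x\<in>residue_box p. int p dvd f x}) = (\<Sum>x\<in>residue_box p. if int p dvd f x then 1 else 0)"
    using sum.inter_filter[OF finite_residue_box, of "\<lambda>_. 1::int"] by simp
  also have "[\<dots> = (\<Sum>x\<in>residue_box p. 1 - f x ^ (p - 1))] (mod int p)"
  proof (rule cong_sum)
    fix x
    show "[(if int p dvd f x then 1 else 0) = 1 - f x ^ (p - 1)] (mod int p)"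
    proof (cases "int p dvd f x")
      case True
      then have "int p dvd f x ^ (p - 1)"
        using p1 dvd_trans[OF _ dvd_power[of "p - 1" "f x"]] by simp
      with True show ?thesis
        by (simp add: cong_iff_dvd_diff)
    next
      case False
      then show ?thesis
        using fermat_theorem_int[OF p False] by (simp add: cong_iff_dvd_diff)
    qed
  qed
  also have "(\<Sum>x\<in>residue_box p. 1 - f x ^ (p - 1)) = int p ^ CARD('n) - (\<Sum>x\<in>residue_box p. f x ^ (p - 1))"
    using sum_vec_prod_eq_prod_sum[of "{0..<int p}" "\<lambda>_ _. 1::int"]
    by (simp add: sum_subtractf residue_box_def)
  also have "[\<dots> = 0 - (\<Sum>x\<in>residue_box p. f x ^ (p - 1))] (mod int p)"
    by (intro cong_diff) (simp_all add: cong_def)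
  finally show ?thesis
    by simp
qed

section \<open>Expanding a power of \<open>F\<^sub>A\<close>\<close>

lemma sum_power_eq_sum_lists:
  fixes m :: "'a \<Rightarrow> 'b::comm_semiring_1"
  assumes "finite I"
  shows "(\<Sum>i\<in>I. m i) ^ N = (\<Sum>xs\<in>{xs. set xs \<subseteq> I \<and> length xs = N}. prod_list (map m xs))"
proof (induction N)
  case 0
  have "{xs. set xs \<subseteq> I \<and> length xs = 0} = {[]}"
    by auto
  then show ?case
    by simp
next
  case (Suc N)
  have "(\<Sum>i\<in>I. m i) ^ Suc N
      = (\<Sum>xs\<in>{xs. set xs \<subseteq> I \<and> length xs = N}. \<Sum>i\<in>I. m i * prod_list (map m xs))"
    by (simp add: Suc sum_distrib_left sum_distrib_right mult.commute)
  also have "\<dots> = (\<Sum>(xs, i)\<in>{xs. set xs \<subseteq> I \<and> length xs = N} \<times> I. prod_list (map m (i # xs)))"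
    by (simp add: sum.cartesian_product)
  also have "\<dots> = (\<Sum>ys\<in>(\<lambda>(xs, i). i # xs) ` ({xs. set xs \<subseteq> I \<and> length xs = N} \<times> I). prod_list (map m ys))"
    by (subst sum.reindex) (auto simp: inj_on_def case_prod_beta)
  finally show ?case
    by (simp only: lists_length_Suc_eq)
qed

lemma prod_list_map_eq_prod_count:
  fixes m :: "'a::finite \<Rightarrow> 'b::comm_monoid_mult"
  shows "prod_list (map m xs) = (\<Prod>i\<in>UNIV. m i ^ count (mset xs) i)"
proof -
  have "prod_list (map m xs) = (\<Prod>i\<in>set_mset (mset xs). m i ^ count (mset xs) i)"
    by (metis image_prod_mset_multiplicity mset_map prod_mset_prod_list)
  also have "\<dots> = (\<Prod>i\<in>UNIV. m i ^ count (mset xs) i)"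
    by (rule prod.mono_neutral_left) (auto simp: count_mset_0_iff[THEN iffD2])
  finally show ?thesis .
qed

lemma size_eq_sum_count:
  fixes M :: "'a::finite multiset"
  shows "size M = (\<Sum>i\<in>UNIV. count M i)"
  unfolding size_multiset_overloaded_eq
  by (rule sum.mono_neutral_left) (auto simp: not_in_iff)

definition monomial_exponent :: "int^'n^'n \<Rightarrow> 'n multiset \<Rightarrow> 'n \<Rightarrow> nat" where
  "monomial_exponent A M j = (\<Sum>i\<in>UNIV. count M i * nat (A$i$j))"

lemma FA_power_eq_sum_lists:
  fixes A :: "int^'n^'n" and x :: "int^'n"
  shows "FA A x ^ N = (\<Sum>xs\<in>{xs::'n list. length xs = N}. \<Prod>j\<in>UNIV. (x$j) ^ monomial_exponent A (mset xs) j)"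
proof -
  define m where "m i = (\<Prod>j\<in>UNIV. (x$j) ^ nat (A$i$j))" for i
  have "FA A x ^ N = (\<Sum>xs\<in>{xs::'n list. length xs = N}. prod_list (map m xs))"
    using sum_power_eq_sum_lists[of "UNIV::'n set" m N] by (simp add: FA_def m_def)
  also have "\<dots> = (\<Sum>xs\<in>{xs::'n list. length xs = N}. \<Prod>j\<in>UNIV. (x$j) ^ monomial_exponent A (mset xs) j)"
  proof (rule sum.cong[OF refl])
    fix xs :: "'n list"
    have "prod_list (map m xs) = (\<Prod>i\<in>UNIV. \<Prod>j\<in>UNIV. (x$j) ^ (count (mset xs) i * nat (A$i$j)))"
      unfolding prod_list_map_eq_prod_count m_def
      by (simp add: prod_power_distrib power_mult[symmetric] mult.commute)
    also have "\<dots> = (\<Prod>j\<in>UNIV. (x$j) ^ monomial_exponent A (mset xs) j)"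
      by (subst prod.swap) (simp add: monomial_exponent_def power_sum)
    finally show "prod_list (map m xs) = (\<Prod>j\<in>UNIV. (x$j) ^ monomial_exponent A (mset xs) j)" .
  qed
  finally show ?thesis .
qed

definition positive_multiple_exponents :: "int^'n^'n \<Rightarrow> nat \<Rightarrow> 'n multiset \<Rightarrow> bool" where
  "positive_multiple_exponents A N M \<longleftrightarrow> (\<forall>j. 0 < monomial_exponent A M j \<and> N dvd monomial_exponent A M j)"

lemma sum_FA_power_residue_box_cong:
  fixes A :: "int^'n^'n"
  assumes p: "prime p"
  shows "[(\<Sum>x\<in>residue_box p. FA A x ^ (p - 1))
          = (-1) ^ CARD('n) * int (card {xs::'n list. length xs = p - 1
                                          \<and> positive_multiple_exponents A (p - 1) (mset xs)})] (mod int p)"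
proof -
  define W where "W = {xs::'n list. length xs = p - 1}"
  have "finite W"
    unfolding W_def using finite_lists_length_eq[of "UNIV::'n set"] by simp
  have "(\<Sum>x\<in>residue_box p. FA A x ^ (p - 1))
      = (\<Sum>xs\<in>W. \<Sum>x\<in>residue_box p. \<Prod>j\<in>UNIV. (x$j) ^ monomial_exponent A (mset xs) j)"
    unfolding FA_power_eq_sum_lists W_def by (rule sum.swap)
  also have "[\<dots> = (\<Sum>xs\<in>W. if positive_multiple_exponents A (p - 1) (mset xs) then (-1) ^ CARD('n) else 0)]
      (mod int p)"
    unfolding positive_multiple_exponents_def
    by (intro cong_sum sum_monomial_residue_box_cong[OF p])
  also have "(\<Sum>xs\<in>W. if positive_multiple_exponents A (p - 1) (mset xs) then (-1) ^ CARD('n) else 0)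
      = (-1) ^ CARD('n) * int (card {xs\<in>W. positive_multiple_exponents A (p - 1) (mset xs)})"
    using sum.inter_filter[OF \<open>finite W\<close>, of "\<lambda>_. (-1::int) ^ CARD('n)"] by (simp add: mult.commute)
  finally show ?thesis
    by (simp add: W_def)
qed

section \<open>Frequency vectors and the set \<open>\<Xi>\<close>\<close>

lemma transpose_ratmat_mult_nth:
  fixes A :: "int^'n^'n"
  shows "(transpose (ratmat A) *v x)$j = (\<Sum>i\<in>UNIV. of_int (A$i$j) * x$i)"
  by (simp add: matrix_vector_mult_def transpose_def ratmat_def)

lemma det_of_int_matrix:
  fixes M :: "int^'n^'n"
  shows "det (\<chi> i j. (of_int (M$i$j) :: 'a::comm_ring_1)) = of_int (det M)"
  unfolding det_def by (simp add: of_int_sum of_int_prod)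

lemma det_ratmat: "det (ratmat A) = of_int (det A)"
  unfolding ratmat_def by (rule det_of_int_matrix)

lemma matrix_inv_mult:
  fixes B :: "'a::semiring_1^'n^'n"
  assumes "invertible B"
  shows "B ** matrix_inv B = mat 1" "matrix_inv B ** B = mat 1"
proof -
  have "B ** matrix_inv B = mat 1 \<and> matrix_inv B ** B = mat 1"
    using assms unfolding invertible_def matrix_inv_def by (rule someI_ex)
  then show "B ** matrix_inv B = mat 1" "matrix_inv B ** B = mat 1"
    by auto
qed

lemma mem_Xi_iff:
  fixes A :: "int^'n^'n"
  assumes "det A \<noteq> 0"
  shows "\<xi> \<in> Xi A \<longleftrightarrow> (\<exists>v::int^'n. (\<forall>i. v$i \<ge> 1) \<and> transpose (ratmat A) *v \<xi> = (\<chi> i. of_int (v$i)))"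
proof -
  let ?B = "transpose (ratmat A)"
  have "invertible ?B"
    using assms by (simp add: invertible_det_nz det_ratmat)
  then have "?B ** matrix_inv ?B = mat 1" "matrix_inv ?B ** ?B = mat 1"
    by (simp_all add: matrix_inv_mult)
  note inv = this
  have "?B *v \<xi> = w \<longleftrightarrow> \<xi> = matrix_inv ?B *v w" for w
  proof
    assume h: "?B *v \<xi> = w"
    have "matrix_inv ?B *v w = (matrix_inv ?B ** ?B) *v \<xi>"
      unfolding h[symmetric] by (rule matrix_vector_mul_assoc)
    then show "\<xi> = matrix_inv ?B *v w"
      by (simp only: inv matrix_vector_mul_lid)
  next
    assume h: "\<xi> = matrix_inv ?B *v w"
    have "?B *v \<xi> = (?B ** matrix_inv ?B) *v w"
      unfolding h by (rule matrix_vector_mul_assoc)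
    then show "?B *v \<xi> = w"
      by (simp only: inv matrix_vector_mul_lid)
  qed
  then show ?thesis
    unfolding Xi_def by blast
qed

lemma Xi_det_mult_integral:
  fixes A :: "int^'n^'n"
  assumes "det A \<noteq> 0" "\<xi> \<in> Xi A"
  shows "\<exists>d::int. of_int (det A) * \<xi>$k = of_int d"
proof -
  let ?B = "transpose (ratmat A)"
  obtain v :: "int^'n" where v: "?B *v \<xi> = (\<chi> i. of_int (v$i))"
    using assms mem_Xi_iff by blast
  define M :: "int^'n^'n" where "M = (\<chi> i j. if j = k then v$i else A$j$i)"
  have "(\<chi> i j. if j = k then (?B *v \<xi>)$i else ?B$i$j) = (\<chi> i j. (of_int (M$i$j) :: rat))"
    unfolding v by (simp add: M_def vec_eq_iff transpose_def ratmat_def)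
  then have "\<xi>$k * of_int (det A) = of_int (det M)"
    using cramer_lemma[of k ?B \<xi>] by (simp add: det_of_int_matrix det_ratmat)
  then show ?thesis
    by (metis mult.commute)
qed

definition frequency :: "nat \<Rightarrow> 'n multiset \<Rightarrow> rat^'n" where
  "frequency N M = (\<chi> i. of_nat (count M i) / of_nat N)"

lemma positive_multiple_exponents_iff_frequency_in_Xi:
  fixes A :: "int^'n^'n"
  assumes nonneg: "\<forall>i j. A$i$j \<ge> 0" and "det A \<noteq> 0" and "N > 0"
  shows "positive_multiple_exponents A N M \<longleftrightarrow> frequency N M \<in> Xi A"
proof -
  have exponent: "(transpose (ratmat A) *v frequency N M)$j = of_nat (monomial_exponent A M j) / of_nat N" for j
    unfolding transpose_ratmat_mult_nth frequency_def monomial_exponent_def of_nat_sum sum_divide_distrib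
    using nonneg by (intro sum.cong) auto
  have "positive_multiple_exponents A N M
      \<longleftrightarrow> (\<forall>j. \<exists>v::int. v \<ge> 1 \<and> of_nat (monomial_exponent A M j) / of_nat N = (of_int v :: rat))"
    unfolding positive_multiple_exponents_def
  proof (intro iff_allI iffI)
    fix j
    assume "0 < monomial_exponent A M j \<and> N dvd monomial_exponent A M j"
    then obtain k where "monomial_exponent A M j = N * k" "k > 0"
      by (auto elim!: dvdE)
    then show "\<exists>v::int. v \<ge> 1 \<and> of_nat (monomial_exponent A M j) / of_nat N = (of_int v :: rat)"
      using \<open>N > 0\<close> by (intro exI[of _ "int k"]) simp
  next
    fix j
    assume "\<exists>v::int. v \<ge> 1 \<and> of_nat (monomial_exponent A M j) / of_nat N = (of_int v :: rat)"
    then obtain v :: int where "v \<ge> 1" "of_nat (monomial_exponent A M j) = (of_int (int N * v) :: rat)"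
      using \<open>N > 0\<close> by (auto simp: field_simps)
    then have "monomial_exponent A M j = N * nat v"
      by (metis nat_int nat_mult_distrib of_int_of_nat_eq of_int_eq_iff of_nat_0_le_iff)
    then show "0 < monomial_exponent A M j \<and> N dvd monomial_exponent A M j"
      using \<open>N > 0\<close> \<open>v \<ge> 1\<close> by simp
  qed
  also have "\<dots> \<longleftrightarrow> (\<exists>v::int^'n. \<forall>j. v$j \<ge> 1 \<and> of_nat (monomial_exponent A M j) / of_nat N = (of_int (v$j) :: rat))"
  proof
    assume "\<forall>j. \<exists>v::int. v \<ge> 1 \<and> of_nat (monomial_exponent A M j) / of_nat N = (of_int v :: rat)"
    then obtain f where "\<forall>j. f j \<ge> 1 \<and> of_nat (monomial_exponent A M j) / of_nat N = (of_int (f j) :: rat)"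
      by metis
    then show "\<exists>v::int^'n. \<forall>j. v$j \<ge> 1 \<and> of_nat (monomial_exponent A M j) / of_nat N = (of_int (v$j) :: rat)"
      by (intro exI[of _ "\<chi> j. f j"]) simp
  qed blast
  also have "\<dots> \<longleftrightarrow> frequency N M \<in> Xi A"
    unfolding mem_Xi_iff[OF \<open>det A \<noteq> 0\<close>] vec_eq_iff exponent by auto
  finally show ?thesis .
qed

lemma age_frequency:
  assumes "size M = N" "N > 0"
  shows "age (frequency N M :: rat^'n::finite) = 1"
  using assms by (simp add: age_def frequency_def size_eq_sum_count flip: sum_divide_distrib of_nat_sum)

lemma ex_frequency_eq:
  fixes A :: "int^'n^'n"
  assumes "det A \<noteq> 0" "det A dvd int N" "N > 0"
    and \<xi>: "\<xi> \<in> Xi A" "age \<xi> = 1" "\<forall>i. \<xi>$i \<ge> 0"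
  shows "\<exists>M. size M = N \<and> frequency N M = \<xi>"
proof -
  have "\<exists>c::nat. of_nat c = of_nat N * \<xi>$i" for i
  proof -
    obtain d where "of_int (det A) * \<xi>$i = of_int d"
      using Xi_det_mult_integral[OF assms(1) \<xi>(1)] by blast
    moreover obtain q where "int N = det A * q"
      using assms(2) by blast
    ultimately have "of_nat N * \<xi>$i = (of_int (q * d) :: rat)"
      by (metis mult.assoc mult.commute of_int_mult of_int_of_nat_eq)
    moreover have "of_nat N * \<xi>$i \<ge> 0"
      using \<xi>(3) by simp
    ultimately show ?thesis
      by (metis of_int_0_le_iff of_int_of_nat_eq nonneg_int_cases)
  qed
  then obtain c where c: "\<And>i. of_nat (c i) = of_nat N * \<xi>$i"
    by metis
  define M where "M = (\<Sum>i\<in>UNIV. replicate_mset (c i) i)"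
  have count_M: "count M i = c i" for i
    by (simp add: M_def count_sum)
  have "(of_nat (size M) :: rat) = of_nat N * age \<xi>"
    by (simp add: size_eq_sum_count count_M c age_def sum_distrib_left)
  then have "size M = N"
    using \<xi>(2) by simp
  moreover have "frequency N M = \<xi>"
    using assms(3) by (simp add: frequency_def vec_eq_iff count_M c)
  ultimately show ?thesis
    by blast
qed

lemma card_permutations_of_multiset_eq_nu_xi:
  assumes "size M = N" "N > 0"
  shows "int (card (permutations_of_multiset M)) = nu_xi (Suc N) (frequency N M :: rat^'n::finite)"
proof -
  have "(\<Prod>i\<in>set_mset M. fact (count M i)) = (\<Prod>i\<in>UNIV. fact (count M i) :: nat)"
    by (rule prod.mono_neutral_left) (auto simp: not_in_iff)
  moreover have "nat \<lfloor>of_nat N * frequency N M $ i\<rfloor> = count M i" for i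
    using assms(2) by (simp add: frequency_def)
  ultimately show ?thesis
    using assms(1) by (simp add: card_permutations_of_multiset(1) nu_xi_def zdiv_int of_nat_prod)
qed

lemma card_lists_eq_sum_card_permutations:
  fixes P :: "'a::finite multiset \<Rightarrow> bool"
  shows "card {xs::'a list. length xs = N \<and> P (mset xs)}
    = (\<Sum>M\<in>{M. size M = N \<and> P M}. card (permutations_of_multiset M))"
proof -
  define W where "W = {xs::'a list. length xs = N \<and> P (mset xs)}"
  define Ms where "Ms = {M. size M = N \<and> P M}"
  have "finite W"
    using finite_lists_length_eq[of "UNIV::'a set" N] by (rule finite_subset[rotated]) (auto simp: W_def)
  have "mset ` W = Ms"
  proof (intro equalityI subsetI)
    fix M assume "M \<in> Ms"
    moreover obtain xs where "mset xs = M"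
      using ex_mset by blast
    ultimately show "M \<in> mset ` W"
      unfolding W_def Ms_def by force
  qed (auto simp: W_def Ms_def)
  moreover have "{xs\<in>W. mset xs = M} = permutations_of_multiset M" if "M \<in> Ms" for M
    using that by (auto simp: W_def Ms_def permutations_of_multiset_def)
  ultimately show ?thesis
    using sum.image_gen[OF \<open>finite W\<close>, of "\<lambda>_. 1::nat" mset] by (simp add: W_def Ms_def)
qed

lemma card_lists_positive_multiple_exponents:
  fixes A :: "int^'n^'n"
  assumes "\<forall>i j. A$i$j \<ge> 0" and "det A \<noteq> 0" "det A dvd int N" "N > 0"
  shows "int (card {xs::'n list. length xs = N \<and> positive_multiple_exponents A N (mset xs)})
    = (\<Sum>\<xi>\<in>{\<xi>\<in>Xi A. age \<xi> = 1 \<and> (\<forall>i. \<xi>$i \<ge> 0)}. nu_xi (Suc N) \<xi>)"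
proof -
  define Ms where "Ms = {M. size M = N \<and> positive_multiple_exponents A N M}"
  define X where "X = {\<xi>\<in>Xi A. age \<xi> = 1 \<and> (\<forall>i. \<xi>$i \<ge> 0)}"
  note in_Xi_iff = positive_multiple_exponents_iff_frequency_in_Xi[OF assms(1,2,4)]
  have "frequency N ` Ms = X"
  proof (intro equalityI subsetI)
    fix \<xi> assume "\<xi> \<in> frequency N ` Ms"
    then obtain M where "M \<in> Ms" "\<xi> = frequency N M"
      by blast
    then show "\<xi> \<in> X"
      using in_Xi_iff age_frequency[OF _ \<open>N > 0\<close>] by (auto simp: Ms_def X_def frequency_def)
  next
    fix \<xi> assume "\<xi> \<in> X"
    moreover from this obtain M where "size M = N" "frequency N M = \<xi>"
      using ex_frequency_eq[OF assms(2-4)] by (auto simp: X_def)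
    ultimately show "\<xi> \<in> frequency N ` Ms"
      using in_Xi_iff by (auto simp: Ms_def X_def)
  qed
  moreover have "inj_on (frequency N) Ms"
    using \<open>N > 0\<close> by (auto intro!: inj_onI multiset_eqI simp: frequency_def vec_eq_iff)
  ultimately have "(\<Sum>\<xi>\<in>X. nu_xi (Suc N) \<xi>) = (\<Sum>M\<in>Ms. nu_xi (Suc N) (frequency N M))"
    by (metis sum.reindex_bij_betw bij_betw_def)
  also have "\<dots> = (\<Sum>M\<in>Ms. int (card (permutations_of_multiset M)))"
    by (intro sum.cong refl) (simp add: Ms_def card_permutations_of_multiset_eq_nu_xi[OF _ \<open>N > 0\<close>])
  finally show ?thesis
    by (simp add: card_lists_eq_sum_card_permutations X_def Ms_def)
qed

theorem proposition3p1:
  fixes A :: "int^'n^'n" and p :: nat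
  assumes "\<forall>i j. A$i$j \<ge> 0"
    and "invertible_poly A"
    and "prime p"
    and "det A dvd (int p - 1)"
  shows "[int (num_zeros A p) =
           (-1) ^ (CARD('n) - 1) *
           (\<Sum>\<xi>\<in>{\<xi>\<in>Xi A. age \<xi> = 1 \<and> (\<forall>i. \<xi>$i \<ge> 0)}. nu_xi p \<xi>)] (mod int p)"
proof -
  have p1: "p > 1"
    using assms(3) prime_gt_1_nat by blast
  have "det A \<noteq> 0"
    using assms(2) by (simp add: invertible_poly_def)
  moreover have "det A dvd int (p - 1)"
    using assms(4) p1 by (simp add: of_nat_diff)
  ultimately have count: "int (card {xs::'n list. length xs = p - 1 \<and> positive_multiple_exponents A (p - 1) (mset xs)})
      = (\<Sum>\<xi>\<in>{\<xi>\<in>Xi A. age \<xi> = 1 \<and> (\<forall>i. \<xi>$i \<ge> 0)}. nu_xi p \<xi>)"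
    using card_lists_positive_multiple_exponents[OF assms(1)] p1 by (simp add: Suc_diff_1)
  have "num_zeros A p = card {x\<in>residue_box p. int p dvd FA A x}"
    unfolding num_zeros_def residue_box_def by simp
  then have "[int (num_zeros A p) = - (\<Sum>x\<in>residue_box p. FA A x ^ (p - 1))] (mod int p)"
    using card_zeros_residue_box_cong[OF assms(3), of "FA A"] by simp
  also have "[- (\<Sum>x\<in>residue_box p. FA A x ^ (p - 1)) = - ((-1) ^ CARD('n) *
      int (card {xs::'n list. length xs = p - 1 \<and> positive_multiple_exponents A (p - 1) (mset xs)}))] (mod int p)"
    using sum_FA_power_residue_box_cong[OF assms(3), of A] by (simp only: cong_minus_minus_iff)
  also have "- ((-1) ^ CARD('n) *
      int (card {xs::'n list. length xs = p - 1 \<and> positive_multiple_exponents A (p - 1) (mset xs)}))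
      = (-1) ^ (CARD('n) - 1) * (\<Sum>\<xi>\<in>{\<xi>\<in>Xi A. age \<xi> = 1 \<and> (\<forall>i. \<xi>$i \<ge> 0)}. nu_xi p \<xi>)"
    unfolding count by (simp add: power_eq_if)
  finally show ?thesis .
qed

end
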